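(* Let $d,N$ be positive integers, $P=(0,N)^d\cap\mathbb{Z}^d$, $\alpha\ge1$, and let $O\subseteq(0,N)^d$ be an open $\alpha$-fat set with $O\cap P\ne\emptyset$. Then $n_{\ell(O)}(O)\le(4\alpha+1)^d$.
   Context: A $d$-cube is an axis-parallel hypercube; width = side length. In-width of $O$: supremum of widths of $d$-cubes contained in $O$; out-width: infimum of widths of $d$-cubes containing $O$; $O$ is $\alpha$-fat if out-width$(O)\le\alpha\cdot$in-width$(O)$. For a positive integer $i$, $\ell(i)$ is the largest $k\ge0$ with $2^k\mid i$; for $x\in P$, $\ell(x)=\min_i\ell(x_i)$; $\ell(O)=\max\{\ell(x):x\in O\cap P\}$. For an integer $l$, $n_l(O)$ is the number of points of $O\cap P$ of level exactly $l$. *)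

theory Defs
  imports "HOL-Analysis.Analysis"
begin

definition dcube :: "real^'n \<Rightarrow> real \<Rightarrow> (real^'n) set" where
  "dcube a w = {x. \<forall>i. a$i \<le> x$i \<and> x$i \<le> a$i + w}"

definition in_width :: "(real^'n) set \<Rightarrow> real" where
  "in_width S = Sup {w. w > 0 \<and> (\<exists>a. dcube a w \<subseteq> S)}"

definition out_width :: "(real^'n) set \<Rightarrow> real" where
  "out_width S = Inf {w. w > 0 \<and> (\<exists>a. S \<subseteq> dcube a w)}"

definition fat :: "real \<Rightarrow> (real^'n) set \<Rightarrow> bool" where
  "fat \<alpha> S \<longleftrightarrow> out_width S \<le> \<alpha> * in_width S"

definition gridP :: "nat \<Rightarrow> (real^'n) set" where
  "gridP N = {x. \<forall>i. x$i \<in> \<int> \<and> 0 < x$i \<and> x$i < real N}"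

definition lev_int :: "int \<Rightarrow> nat" where
  "lev_int i = (GREATEST k. (2::int)^k dvd i)"

definition lev_pt :: "real^'n \<Rightarrow> nat" where
  "lev_pt x = Min (range (\<lambda>i. lev_int \<lfloor>x$i\<rfloor>))"

definition lev_set :: "nat \<Rightarrow> (real^'n) set \<Rightarrow> nat" where
  "lev_set N S = Max (lev_pt ` (S \<inter> gridP N))"

definition n_lev :: "nat \<Rightarrow> nat \<Rightarrow> (real^'n) set \<Rightarrow> nat" where
  "n_lev N l S = card {x \<in> S \<inter> gridP N. lev_pt x = l}"

end

theory Submission
  imports Defs
begin

text \<open>Let \<open>L = \<ell>(O)\<close> and \<open>s = 2^L\<close>. A cube of width at least \<open>2s\<close> contains a point whose
  coordinates are all multiples of \<open>2s\<close>; inside \<open>O\<close> such a point would be a grid point of level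
  above \<open>L\<close>. Hence the in-width of \<open>O\<close> is at most \<open>2s\<close>, and by fatness \<open>O\<close> lies in a cube of
  width less than \<open>(2\<alpha> + 1) s\<close>. The points of level \<open>L\<close> have all coordinates divisible by \<open>s\<close>,
  so such a cube contains fewer than \<open>2\<alpha> + 2 \<le> 4\<alpha> + 1\<close> of them along each axis.\<close>

lemma pow2_dvd_imp_le:
  assumes "i \<noteq> 0" "(2::int) ^ k dvd i"
  shows "k \<le> nat \<bar>i\<bar>"
proof -
  have "\<bar>(2::int) ^ k\<bar> \<le> \<bar>i\<bar>"
    using assms dvd_imp_le_int by blast
  moreover have "int k < 2 ^ k"
  proof -
    have "int k < int (2 ^ k)"
      using less_exp[of k] by (simp only: of_nat_less_iff)
    then show ?thesis by simp
  qed
  ultimately show ?thesis by linarith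
qed

lemma lev_int_ge:
  assumes "i \<noteq> 0" "(2::int) ^ k dvd i"
  shows "k \<le> lev_int i"
  unfolding lev_int_def
proof (rule Greatest_le_nat[where b = "nat \<bar>i\<bar>"])
  show "(2::int) ^ k dvd i" by fact
  show "\<And>y. (2::int) ^ y dvd i \<Longrightarrow> y \<le> nat \<bar>i\<bar>"
    using assms(1) by (rule pow2_dvd_imp_le)
qed

lemma pow2_lev_int_dvd:
  assumes "i \<noteq> 0" "k \<le> lev_int i"
  shows "(2::int) ^ k dvd i"
proof -
  have "(2::int) ^ lev_int i dvd i"
    unfolding lev_int_def
  proof (rule GreatestI_nat[where k = 0 and b = "nat \<bar>i\<bar>"])
    show "\<And>y. (2::int) ^ y dvd i \<Longrightarrow> y \<le> nat \<bar>i\<bar>"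
      using assms(1) by (rule pow2_dvd_imp_le)
  qed simp
  moreover have "(2::int) ^ k dvd 2 ^ lev_int i"
    using assms(2) by (simp add: le_imp_power_dvd)
  ultimately show ?thesis by (rule dvd_trans[rotated])
qed

lemma lev_pt_le: "lev_pt x \<le> lev_int \<lfloor>(x::real^'n) $ i\<rfloor>"
  unfolding lev_pt_def by (rule Min_le) auto

lemma lev_pt_ge: "(\<And>i. k \<le> lev_int \<lfloor>(x::real^'n) $ i\<rfloor>) \<Longrightarrow> k \<le> lev_pt x"
  unfolding lev_pt_def by (subst Min_ge_iff) auto

lemma lev_pt_ge_of_multiples:
  fixes x :: "real^'n"
  assumes "\<And>i. x $ i = of_int (2 ^ k * m i)" "\<And>i. m i \<noteq> 0"
  shows "k \<le> lev_pt x"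
proof (rule lev_pt_ge)
  fix i
  have "\<lfloor>x $ i\<rfloor> = 2 ^ k * m i"
    using assms(1) by (metis floor_of_int)
  then show "k \<le> lev_int \<lfloor>x $ i\<rfloor>"
    using assms(2) by (intro lev_int_ge) auto
qed

lemma gridP_coord_multiple:
  assumes "x \<in> gridP N"
  shows "\<exists>m. x $ i = 2 ^ lev_pt x * of_int m"
proof -
  have "x $ i \<in> \<int>" "0 < x $ i"
    using assms unfolding gridP_def by auto
  then obtain j where j: "x $ i = of_int j" "j \<noteq> 0"
    by (auto elim: Ints_cases)
  have "lev_pt x \<le> lev_int j"
    using lev_pt_le[of x i] j(1) by simp
  then obtain m where "j = 2 ^ lev_pt x * m"
    using pow2_lev_int_dvd j(2) by blast
  then show ?thesis
    using j(1) by auto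
qed

lemma vec_nth_image_subset_PiE:
  "A \<subseteq> {x. \<forall>i. x $ i \<in> T i} \<Longrightarrow> vec_nth ` A \<subseteq> Pi\<^sub>E UNIV T"
  by (auto simp: PiE_def extensional_def)

lemma finite_vec_subset:
  fixes A :: "('a^'n) set"
  assumes "A \<subseteq> {x. \<forall>i. x $ i \<in> T i}" "\<And>i. finite (T i)"
  shows "finite A"
proof -
  have "finite (vec_nth ` A)"
    using vec_nth_image_subset_PiE[OF assms(1)] finite_PiE[of UNIV T] assms(2)
    by (auto intro: finite_subset)
  then show ?thesis
    by (rule finite_imageD) (simp add: inj_on_def vec_nth_inject)
qed

lemma card_vec_subset_le:
  fixes A :: "('a^'n) set"
  assumes "A \<subseteq> {x. \<forall>i. x $ i \<in> T i}" "\<And>i. finite (T i)"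
  shows "card A \<le> (\<Prod>i\<in>UNIV. card (T i))"
proof -
  have "card A = card (vec_nth ` A)"
    by (rule card_image[symmetric]) (simp add: inj_on_def vec_nth_inject)
  also have "\<dots> \<le> card (Pi\<^sub>E UNIV T)"
    using vec_nth_image_subset_PiE[OF assms(1)] finite_PiE[of UNIV T] assms(2)
    by (intro card_mono) auto
  also have "\<dots> = (\<Prod>i\<in>UNIV. card (T i))"
    by (simp add: card_PiE)
  finally show ?thesis .
qed

lemma finite_gridP: "finite (gridP N :: (real^'n) set)"
proof -
  have "gridP N \<subseteq> {x :: real^'n. \<forall>i. x $ i \<in> of_int ` {0..int N}}"
  proof (intro subsetI CollectI allI)
    fix x :: "real^'n" and i
    assume "x \<in> gridP N"
    then have "x $ i \<in> \<int>" "0 < x $ i" "x $ i < real N"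
      unfolding gridP_def by auto
    moreover obtain j where "x $ i = of_int j"
      using \<open>x $ i \<in> \<int>\<close> by (auto elim!: Ints_cases)
    ultimately show "x $ i \<in> of_int ` {0..int N}"
      by auto
  qed
  then show ?thesis
    by (rule finite_vec_subset) simp
qed

lemma lev_pt_le_lev_set: "x \<in> S \<inter> gridP N \<Longrightarrow> lev_pt x \<le> lev_set N S"
  unfolding lev_set_def using finite_gridP by (intro Max_ge) auto

lemma open_contains_dcube:
  fixes x :: "real^'n"
  assumes "open S" "x \<in> S"
  shows "\<exists>w>0. dcube x w \<subseteq> S"
proof -
  obtain e where e: "e > 0" "ball x e \<subseteq> S"
    using assms open_contains_ball by blast
  define w where "w = e / (2 * real CARD('n))"
  have "dcube x w \<subseteq> ball x e"
  proof
    fix y assume "y \<in> dcube x w"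
    then have bounds: "x $ i \<le> y $ i \<and> y $ i \<le> x $ i + w" for i
      unfolding dcube_def by blast
    have "\<bar>(y - x) $ i\<bar> \<le> w" for i
      using bounds[of i] by (simp add: abs_le_iff)
    then have "norm (y - x) \<le> (\<Sum>i\<in>(UNIV::'n set). w)"
      by (intro order_trans[OF norm_le_l1_cart] sum_mono)
    also have "\<dots> < e"
      using e(1) unfolding w_def by simp
    finally show "y \<in> ball x e"
      by (simp add: dist_norm norm_minus_commute)
  qed
  moreover have "w > 0"
    using e(1) unfolding w_def by simp
  ultimately show ?thesis
    using e(2) by blast
qed

lemma dcube_contains_lattice_point:
  fixes a :: "real^'n"
  assumes "t > 0" "t \<le> w"
  shows "(\<chi> i. t * of_int \<lceil>a $ i / t\<rceil>) \<in> dcube a w"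
proof -
  have "a $ i \<le> t * of_int \<lceil>a $ i / t\<rceil> \<and> t * of_int \<lceil>a $ i / t\<rceil> \<le> a $ i + w" for i
  proof
    show "a $ i \<le> t * of_int \<lceil>a $ i / t\<rceil>"
      using assms(1) by (metis le_of_int_ceiling mult.commute pos_divide_le_eq)
    have "t * of_int \<lceil>a $ i / t\<rceil> < t * (a $ i / t + 1)"
      using assms(1) by (intro mult_strict_left_mono) linarith+
    also have "\<dots> = a $ i + t"
      using assms(1) by (simp add: field_simps)
    finally show "t * of_int \<lceil>a $ i / t\<rceil> \<le> a $ i + w"
      using assms(2) by linarith
  qed
  then show ?thesis
    unfolding dcube_def by simp
qed

lemma in_width_le_pow2_lev_set:
  fixes S :: "(real^'n) set"
  assumes "open S" "S \<subseteq> {x. \<forall>i. 0 < x $ i \<and> x $ i < real N}" "S \<inter> gridP N \<noteq> {}"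
  shows "in_width S \<le> 2 ^ Suc (lev_set N S)"
  unfolding in_width_def
proof (rule cSup_least)
  show "{w. w > 0 \<and> (\<exists>a. dcube a w \<subseteq> S)} \<noteq> {}"
    using assms(1,3) open_contains_dcube by blast
next
  fix w assume "w \<in> {w. w > 0 \<and> (\<exists>a. dcube a w \<subseteq> S)}"
  then obtain a :: "real^'n" where a: "dcube a w \<subseteq> S"
    by blast
  define t :: real where "t = 2 ^ Suc (lev_set N S)"
  define y :: "real^'n" where "y = (\<chi> i. t * of_int \<lceil>a $ i / t\<rceil>)"
  show "w \<le> t"
  proof (rule ccontr)
    assume "\<not> w \<le> t"
    then have "y \<in> S"
      using a dcube_contains_lattice_point[of t w a] unfolding y_def t_def by auto
    then have pos: "0 < y $ i" "y $ i < real N" for i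
      using assms(2) by auto
    have y_eq: "y $ i = of_int (2 ^ Suc (lev_set N S) * \<lceil>a $ i / t\<rceil>)" for i
      unfolding y_def t_def by simp
    have "y \<in> gridP N"
      unfolding gridP_def using pos y_eq by auto
    then have "lev_pt y \<le> lev_set N S"
      using \<open>y \<in> S\<close> lev_pt_le_lev_set by blast
    moreover have "\<lceil>a $ i / t\<rceil> \<noteq> 0" for i
      using pos(1)[of i] y_eq[of i] by auto
    then have "Suc (lev_set N S) \<le> lev_pt y"
      using y_eq by (rule lev_pt_ge_of_multiples[rotated])
    ultimately show False by simp
  qed
qed

lemma subset_box_imp_subset_dcube:
  fixes S :: "(real^'n) set"
  assumes "S \<subseteq> {x. \<forall>i. 0 < x $ i \<and> x $ i < c}"
  shows "S \<subseteq> dcube 0 c"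
proof
  fix x assume "x \<in> S"
  then have "0 < x $ i \<and> x $ i < c" for i
    using assms by blast
  then show "x \<in> dcube 0 c"
    unfolding dcube_def by (simp add: less_imp_le)
qed

lemma fat_out_width_less:
  assumes "fat \<alpha> S" "\<alpha> \<ge> 0" "in_width S \<le> t" "e > 0"
  shows "out_width S < \<alpha> * t + e"
proof -
  have "out_width S \<le> \<alpha> * in_width S"
    using assms(1) unfolding fat_def .
  also have "\<dots> \<le> \<alpha> * t"
    using assms(2,3) by (rule mult_left_mono[rotated])
  finally show ?thesis
    using assms(4) by linarith
qed

lemma ex_dcube_width_less:
  fixes S :: "(real^'n) set"
  assumes "S \<subseteq> dcube b v" "v > 0" "out_width S < c"
  shows "\<exists>a w. S \<subseteq> dcube a w \<and> 0 < w \<and> w < c"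
proof -
  have "{w. w > 0 \<and> (\<exists>a. S \<subseteq> dcube a w)} \<noteq> {}"
    using assms(1,2) by blast
  from cInf_lessD[OF this assms(3)[unfolded out_width_def]] show ?thesis
    by blast
qed

lemma card_dcube_multiples_le:
  fixes A :: "(real^'n) set"
  assumes "s > 0" "w \<ge> 0" "A \<subseteq> dcube a w" "\<And>x i. x \<in> A \<Longrightarrow> \<exists>m. x $ i = s * of_int m"
  shows "real (card A) \<le> (w / s + 1) ^ CARD('n)"
proof -
  define T where "T i = (\<lambda>k. s * of_int k) ` {\<lceil>a $ i / s\<rceil>..\<lfloor>(a $ i + w) / s\<rfloor>}" for i
  have "A \<subseteq> {x. \<forall>i. x $ i \<in> T i}"
  proof (intro subsetI CollectI allI)
    fix x i assume "x \<in> A"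
    then obtain m where m: "x $ i = s * of_int m"
      using assms(4) by blast
    have "x \<in> dcube a w"
      using \<open>x \<in> A\<close> assms(3) by blast
    then have "a $ i \<le> s * of_int m" "s * of_int m \<le> a $ i + w"
      unfolding dcube_def m[symmetric] by blast+
    then have "a $ i / s \<le> of_int m" "of_int m \<le> (a $ i + w) / s"
      using assms(1) by (simp_all add: pos_divide_le_eq pos_le_divide_eq mult.commute)
    then have "m \<in> {\<lceil>a $ i / s\<rceil>..\<lfloor>(a $ i + w) / s\<rfloor>}"
      by (simp add: ceiling_le_iff le_floor_iff)
    then show "x $ i \<in> T i"
      unfolding T_def m by (rule imageI)
  qed
  then have "card A \<le> (\<Prod>i\<in>UNIV. card (T i))"
    by (rule card_vec_subset_le) (simp add: T_def)
  then have "real (card A) \<le> (\<Prod>i\<in>UNIV. real (card (T i)))"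
    by (metis of_nat_mono of_nat_prod)
  also have "\<dots> \<le> (\<Prod>i\<in>(UNIV::'n set). w / s + 1)"
  proof (rule prod_mono)
    fix i
    have "card (T i) \<le> card {\<lceil>a $ i / s\<rceil>..\<lfloor>(a $ i + w) / s\<rfloor>}"
      unfolding T_def by (rule card_image_le) simp
    then have "real (card (T i)) \<le> max 0 (of_int (\<lfloor>(a $ i + w) / s\<rfloor> + 1 - \<lceil>a $ i / s\<rceil>))"
      by simp
    moreover have "(a $ i + w) / s = a $ i / s + w / s"
      by (simp add: add_divide_distrib)
    moreover have "w / s \<ge> 0"
      using assms(1,2) by simp
    ultimately show "0 \<le> real (card (T i)) \<and> real (card (T i)) \<le> w / s + 1"
      by linarith
  qed
  finally show ?thesis
    by simp
qed

theorem corollary2: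
  fixes N :: nat and \<alpha> :: real and S :: "(real^'n) set"
  assumes "N > 0" and "\<alpha> \<ge> 1"
    and "open S" and "S \<subseteq> {x. \<forall>i. 0 < x$i \<and> x$i < real N}"
    and "fat \<alpha> S"
    and "S \<inter> gridP N \<noteq> {}"
  shows "real (n_lev N (lev_set N S) S) \<le> (4 * \<alpha> + 1) ^ CARD('n)"
proof -
  define s :: real where "s = 2 ^ lev_set N S"
  have s_pos: "s > 0"
    unfolding s_def by simp
  have "in_width S \<le> 2 * s"
    using in_width_le_pow2_lev_set[OF assms(3,4,6)] unfolding s_def by simp
  then have "out_width S < \<alpha> * (2 * s) + s"
    using assms(2) by (intro fat_out_width_less[OF assms(5)] s_pos) simp_all
  moreover have "S \<subseteq> dcube 0 (real N)" "real N > 0"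
    using subset_box_imp_subset_dcube[OF assms(4)] assms(1) by auto
  ultimately obtain a w where aw: "S \<subseteq> dcube a w" "0 < w" "w < \<alpha> * (2 * s) + s"
    using ex_dcube_width_less by blast
  have "\<exists>m. x $ i = s * of_int m" if "x \<in> {x \<in> S \<inter> gridP N. lev_pt x = lev_set N S}" for x i
    using that gridP_coord_multiple[of x N i] unfolding s_def by auto
  then have "real (n_lev N (lev_set N S) S) \<le> (w / s + 1) ^ CARD('n)"
    unfolding n_lev_def using aw(1)
    by (intro card_dcube_multiples_le[OF s_pos less_imp_le[OF aw(2)]]) auto
  also have "\<dots> \<le> (4 * \<alpha> + 1) ^ CARD('n)"
  proof (rule power_mono)
    have "w / s < 2 * \<alpha> + 1"
      using aw(3) s_pos by (simp add: divide_less_eq algebra_simps)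
    then show "w / s + 1 \<le> 4 * \<alpha> + 1"
      using assms(2) by linarith
    show "0 \<le> w / s + 1"
      using aw(2) s_pos by simp
  qed
  finally show ?thesis .
qed

end
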